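(* Let $G$ be a finite Abelian group, $M\subseteq\mathbb{Z}\setminus\{0\}$ a finite set, and $S\subseteq G$ such that $G \leq M \diamond_1 S$. Let $t>0$ be an integer, and let \[S^{(t)}\triangleq\{(s,0,\dots, 0) : s \in S\} \cup \{(0,s,0,\dots,0) : s\in S\} \cup \cdots \cup\{(0,\dots,0,s) : s \in S\}\subseteq G^t.\] Then $G^{t}\leq M \diamond_t S^{(t)}$.
   Context: For a finite Abelian group $G$, a finite set $M\subseteq\mathbb{Z}\setminus\{0\}$ and $S=\{s_1,\dots,s_n\}\subseteq G$, we write $G\le M\diamond_t S$ (“$M$ completely $t$-splits $G$ with splitter set $S$”) if for every $g\in G$ there is a vector $\mathbf{e}\in(M\cup\{0\})^n$ of Hamming weight at most $t$ such that $g=\sum_i e_is_i$ (with $e_is_i$ the $e_i$-fold group multiple). *)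

theory Defs
  imports "HOL-Algebra.Product_Groups" "HOL-Algebra.FiniteProduct"
begin

text \<open>The splitter set S \<subseteq> carrier G is
  indexed by its own elements; a coefficient vector is a function e from S to
  M \<union> {0}, its Hamming weight is the number of s \<in> S with e s \<noteq> 0, and the
  combination is the group product of the integer powers s^(e s)
  (multiplicative notation for the Abelian group).\<close>
definition completely_splits ::
  "('a, 'b) monoid_scheme \<Rightarrow> int set \<Rightarrow> nat \<Rightarrow> 'a set \<Rightarrow> bool" where
  "completely_splits G M t S \<longleftrightarrow>
     (\<forall>g\<in>carrier G. \<exists>e :: 'a \<Rightarrow> int.
        (\<forall>s\<in>S. e s \<in> M \<union> {0}) \<and>
        card {s\<in>S. e s \<noteq> 0} \<le> t \<and>
        g = finprod G (\<lambda>s. s [^]\<^bsub>G\<^esub> e s) S)"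

definition power_group :: "('a, 'b) monoid_scheme \<Rightarrow> nat \<Rightarrow> (nat \<Rightarrow> 'a) monoid" where
  "power_group G t = product_group {..<t} (\<lambda>_. G)"

definition spread_set :: "('a, 'b) monoid_scheme \<Rightarrow> nat \<Rightarrow> 'a set \<Rightarrow> (nat \<Rightarrow> 'a) set" where
  "spread_set G t S = {(\<lambda>j\<in>{..<t}. if j = i then s else \<one>\<^bsub>G\<^esub>) | i s. i < t \<and> s \<in> S}"

end

theory Submission
  imports Defs
begin

text \<open>A weight-r splitting of G is applied in each coordinate of g \<in> G^t separately:
  writing g j as a product of at most r powers s^m with s \<in> S and moving each s to
  coordinate j gives g as a product of at most t r powers of elements of S^(t).
  Distinct pairs (j, s) with s \<noteq> 1 give distinct elements of S^(t), so these
  coefficients are well defined.\<close>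

lemma comm_group_product_group:
  assumes "\<And>i. i \<in> I \<Longrightarrow> comm_group (G i)"
  shows "comm_group (product_group I G)"
proof (rule group.group_comm_groupI)
  show "group (product_group I G)"
    using assms by (simp add: comm_group.axioms(2))
  show "x \<otimes>\<^bsub>product_group I G\<^esub> y = y \<otimes>\<^bsub>product_group I G\<^esub> x"
    if "x \<in> carrier (product_group I G)" "y \<in> carrier (product_group I G)" for x y
    using that assms by (auto simp: PiE_iff intro!: restrict_ext comm_monoid.m_comm comm_group.axioms(1))
qed

lemma component_hom_product_group:
  assumes "\<And>i. i \<in> I \<Longrightarrow> group (G i)" and "j \<in> I"
  shows "(\<lambda>x. x j) \<in> hom (product_group I G) (G j)"
  using assms by (auto simp: hom_def PiE_iff)

lemma hom_finprod:
  assumes "comm_group G" "comm_group H" "h \<in> hom G H" "f \<in> A \<rightarrow> carrier G"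
  shows "h (finprod G f A) = finprod H (h \<circ> f) A"
proof -
  interpret G: comm_group G by fact
  interpret H: comm_group H by fact
  interpret group_hom G H h
    using assms(3) by (simp add: group_hom_def group_hom_axioms_def G.group_axioms H.group_axioms)
  show ?thesis
    using assms(4)
  proof (induction A rule: infinite_finite_induct)
    case (insert a A)
    then have "(\<lambda>x. h (f x)) \<in> insert a A \<rightarrow> carrier H"
      by (fastforce intro: hom_closed)
    with insert show ?case
      by (simp add: G.finprod_insert H.finprod_insert)
  qed simp_all
qed

lemma int_pow_product_group_component:
  assumes "\<And>i. i \<in> I \<Longrightarrow> group (G i)" "j \<in> I" "x \<in> carrier (product_group I G)"
  shows "(x [^]\<^bsub>product_group I G\<^esub> (n::int)) j = x j [^]\<^bsub>G j\<^esub> n"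
  using hom_int_pow[OF component_hom_product_group[OF assms(1,2)] assms(3)] assms by simp

lemma finprod_product_group_component:
  assumes "\<And>i. i \<in> I \<Longrightarrow> comm_group (G i)" "j \<in> I"
    and "f \<in> A \<rightarrow> carrier (product_group I G)"
  shows "finprod (product_group I G) f A j = finprod (G j) (\<lambda>a. f a j) A"
  using hom_finprod[OF comm_group_product_group[OF assms(1)] assms(1)[OF assms(2)]
      component_hom_product_group assms(3)] assms
  by (simp add: comp_def comm_group.axioms(2))

lemma comm_group_power_group: "comm_group G \<Longrightarrow> comm_group (power_group G t)"
  unfolding power_group_def by (rule comm_group_product_group)

lemma completely_splits_superset:
  assumes "comm_group G" "finite S'" "S' \<subseteq> carrier G" "S \<subseteq> S'"
    and "completely_splits G M r S"
  shows "completely_splits G M r S'"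
  unfolding completely_splits_def
proof
  interpret G: comm_group G by fact
  fix g assume "g \<in> carrier G"
  with assms(5) obtain e where e: "\<forall>s\<in>S. e s \<in> M \<union> {0}" "card {s\<in>S. e s \<noteq> 0} \<le> r"
    and g: "g = finprod G (\<lambda>s. s [^]\<^bsub>G\<^esub> e s) S"
    unfolding completely_splits_def by blast
  define e' where "e' s = (if s \<in> S then e s else 0)" for s
  show "\<exists>e. (\<forall>s\<in>S'. e s \<in> M \<union> {0}) \<and> card {s\<in>S'. e s \<noteq> 0} \<le> r \<and>
      g = finprod G (\<lambda>s. s [^]\<^bsub>G\<^esub> e s) S'"
  proof (intro exI conjI)
    show "\<forall>s\<in>S'. e' s \<in> M \<union> {0}"
      using e(1) by (simp add: e'_def)
    have "{s\<in>S'. e' s \<noteq> 0} = {s\<in>S. e s \<noteq> 0}"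
      using assms(4) by (auto simp: e'_def)
    with e(2) show "card {s\<in>S'. e' s \<noteq> 0} \<le> r"
      by simp
    show "g = finprod G (\<lambda>s. s [^]\<^bsub>G\<^esub> e' s) S'"
      unfolding g using assms(2-4)
      by (intro G.finprod_mono_neutral_cong_left) (auto simp: e'_def)
  qed
qed

lemma completely_splits_Diff_one:
  assumes "comm_group G" "finite S" "S \<subseteq> carrier G"
    and "completely_splits G M r S"
  shows "completely_splits G M r (S - {\<one>\<^bsub>G\<^esub>})"
  unfolding completely_splits_def
proof
  interpret G: comm_group G by fact
  fix g assume "g \<in> carrier G"
  with assms(4) obtain e where e: "\<forall>s\<in>S. e s \<in> M \<union> {0}" "card {s\<in>S. e s \<noteq> 0} \<le> r"
    and g: "g = finprod G (\<lambda>s. s [^]\<^bsub>G\<^esub> e s) S"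
    unfolding completely_splits_def by blast
  show "\<exists>e. (\<forall>s\<in>S - {\<one>\<^bsub>G\<^esub>}. e s \<in> M \<union> {0}) \<and> card {s\<in>S - {\<one>\<^bsub>G\<^esub>}. e s \<noteq> 0} \<le> r \<and>
      g = finprod G (\<lambda>s. s [^]\<^bsub>G\<^esub> e s) (S - {\<one>\<^bsub>G\<^esub>})"
  proof (intro exI conjI)
    show "\<forall>s\<in>S - {\<one>\<^bsub>G\<^esub>}. e s \<in> M \<union> {0}"
      using e(1) by simp
    have "card {s\<in>S - {\<one>\<^bsub>G\<^esub>}. e s \<noteq> 0} \<le> card {s\<in>S. e s \<noteq> 0}"
      using assms(2) by (intro card_mono) auto
    with e(2) show "card {s\<in>S - {\<one>\<^bsub>G\<^esub>}. e s \<noteq> 0} \<le> r"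
      by simp
    show "g = finprod G (\<lambda>s. s [^]\<^bsub>G\<^esub> e s) (S - {\<one>\<^bsub>G\<^esub>})"
      unfolding g using assms(2,3)
      by (intro G.finprod_mono_neutral_cong_right) auto
  qed
qed

definition coord_vector :: "('a, 'b) monoid_scheme \<Rightarrow> nat \<Rightarrow> nat \<Rightarrow> 'a \<Rightarrow> nat \<Rightarrow> 'a" where
  "coord_vector G t i s = (\<lambda>j\<in>{..<t}. if j = i then s else \<one>\<^bsub>G\<^esub>)"

lemma coord_vector_apply [simp]:
  "j < t \<Longrightarrow> coord_vector G t i s j = (if j = i then s else \<one>\<^bsub>G\<^esub>)"
  by (simp add: coord_vector_def)

lemma coord_vector_in_carrier:
  "monoid G \<Longrightarrow> s \<in> carrier G \<Longrightarrow> coord_vector G t i s \<in> carrier (power_group G t)"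
  by (simp add: coord_vector_def power_group_def monoid.one_closed)

lemma spread_set_eq_image:
  "spread_set G t S = (\<lambda>(i, s). coord_vector G t i s) ` ({..<t} \<times> S)"
  unfolding spread_set_def coord_vector_def by auto

lemma finite_spread_set: "finite S \<Longrightarrow> finite (spread_set G t S)"
  by (simp add: spread_set_eq_image)

lemma spread_set_mono: "S \<subseteq> S' \<Longrightarrow> spread_set G t S \<subseteq> spread_set G t S'"
  unfolding spread_set_def by blast

lemma spread_set_subset_carrier:
  "monoid G \<Longrightarrow> S \<subseteq> carrier G \<Longrightarrow> spread_set G t S \<subseteq> carrier (power_group G t)"
  by (auto simp: spread_set_eq_image coord_vector_in_carrier)

lemma inj_on_coord_vector:
  assumes "\<one>\<^bsub>G\<^esub> \<notin> S"
  shows "inj_on (\<lambda>(i, s). coord_vector G t i s) ({..<t} \<times> S)"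
proof (rule inj_onI, clarify)
  fix i s i' s'
  assume "i < t" "s \<in> S" "i' < t" "s' \<in> S" and eq: "coord_vector G t i s = coord_vector G t i' s'"
  then have "coord_vector G t i' s' i = s" "coord_vector G t i s i' = s'"
    by (metis coord_vector_apply)+
  with assms \<open>s \<in> S\<close> \<open>s' \<in> S\<close> \<open>i < t\<close> \<open>i' < t\<close> show "i = i' \<and> s = s'"
    by (auto split: if_splits)
qed

lemma finprod_spread_set_component:
  fixes e :: "(nat \<Rightarrow> 'a) \<Rightarrow> int" and E :: "nat \<Rightarrow> 'a \<Rightarrow> int"
  assumes "comm_group G" "finite S" "S \<subseteq> carrier G" "j < t"
    and e: "\<And>i s. i < t \<Longrightarrow> s \<in> S \<Longrightarrow> e (coord_vector G t i s) = E i s"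
  shows "finprod (power_group G t) (\<lambda>v. v [^]\<^bsub>power_group G t\<^esub> e v) (spread_set G t S) j
       = finprod G (\<lambda>s. s [^]\<^bsub>G\<^esub> E j s) S"
proof -
  interpret G: comm_group G by fact
  interpret P: comm_group "power_group G t" using comm_group_power_group[OF assms(1)] .
  let ?T = "spread_set G t S"
  have T: "?T \<subseteq> carrier (power_group G t)"
    using spread_set_subset_carrier[OF G.monoid_axioms assms(3)] .
  have pow_in_carrier: "(\<lambda>v. v [^]\<^bsub>power_group G t\<^esub> e v) \<in> ?T \<rightarrow> carrier (power_group G t)"
    using T by (auto intro!: P.int_pow_closed)
  have "finprod (power_group G t) (\<lambda>v. v [^]\<^bsub>power_group G t\<^esub> e v) ?T j
      = finprod G (\<lambda>v. (v [^]\<^bsub>power_group G t\<^esub> e v) j) ?T"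
    using finprod_product_group_component[of "{..<t}" "\<lambda>_. G"] pow_in_carrier assms(1,4)
    by (simp add: power_group_def)
  also have "\<dots> = finprod G (\<lambda>v. v j [^]\<^bsub>G\<^esub> e v) ?T"
    using T assms(4) int_pow_product_group_component[of "{..<t}" "\<lambda>_. G"]
    by (intro G.finprod_cong') (auto simp: power_group_def G.group_axioms)
  also have "\<dots> = finprod G (\<lambda>v. v j [^]\<^bsub>G\<^esub> e v) (coord_vector G t j ` S)"
  proof (rule G.finprod_mono_neutral_cong_right)
    show "v j [^]\<^bsub>G\<^esub> e v = \<one>\<^bsub>G\<^esub>" if "v \<in> ?T - coord_vector G t j ` S" for v
      using that assms(4) by (auto simp: spread_set_eq_image)
    show "(\<lambda>v. v j [^]\<^bsub>G\<^esub> e v) \<in> ?T \<rightarrow> carrier G"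
      using T assms(4) by (auto simp: power_group_def)
    show "coord_vector G t j ` S \<subseteq> ?T"
      using assms(4) by (auto simp: spread_set_def coord_vector_def)
  qed (simp_all add: finite_spread_set assms(2))
  also have "\<dots> = finprod G (\<lambda>s. s [^]\<^bsub>G\<^esub> E j s) S"
  proof (subst G.finprod_reindex)
    show "inj_on (coord_vector G t j) S"
      by (rule inj_onI) (metis assms(4) coord_vector_apply)
  qed (use assms in \<open>auto intro!: G.finprod_cong'\<close>)
  finally show ?thesis .
qed

lemma card_spread_set_support_le:
  assumes "finite S"
    and "\<And>i s. i < t \<Longrightarrow> s \<in> S \<Longrightarrow> e (coord_vector G t i s) = E i s"
    and "\<And>i. i < t \<Longrightarrow> card {s\<in>S. E i s \<noteq> 0} \<le> r"
  shows "card {v\<in>spread_set G t S. e v \<noteq> 0} \<le> t * r"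
proof -
  have "{v\<in>spread_set G t S. e v \<noteq> 0} = (\<Union>i<t. coord_vector G t i ` {s\<in>S. E i s \<noteq> 0})"
    using assms(2) by (auto simp: spread_set_eq_image)
  also have "card \<dots> \<le> (\<Sum>i<t. card (coord_vector G t i ` {s\<in>S. E i s \<noteq> 0}))"
    by (rule card_UN_le) simp
  also have "\<dots> \<le> (\<Sum>i<t. r)"
    using assms(1,3) by (intro sum_mono order.trans[OF card_image_le]) simp_all
  finally show ?thesis
    by simp
qed

lemma completely_splits_power_group_of_one_notin:
  assumes "comm_group G" "finite S" "S \<subseteq> carrier G" "\<one>\<^bsub>G\<^esub> \<notin> S"
    and "completely_splits G M r S"
  shows "completely_splits (power_group G t) M (t * r) (spread_set G t S)"
  unfolding completely_splits_def
proof
  interpret G: comm_group G by fact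
  let ?T = "spread_set G t S"
  let ?cv = "\<lambda>(i, s). coord_vector G t i s"
  fix g assume g: "g \<in> carrier (power_group G t)"
  have "\<forall>i\<in>{..<t}. \<exists>E. (\<forall>s\<in>S. E s \<in> M \<union> {0}) \<and> card {s\<in>S. E s \<noteq> 0} \<le> r \<and>
      g i = finprod G (\<lambda>s. s [^]\<^bsub>G\<^esub> E s) S"
    using assms(5) g unfolding completely_splits_def power_group_def by auto
  then obtain E :: "nat \<Rightarrow> 'a \<Rightarrow> int" where E: "\<forall>i\<in>{..<t}. (\<forall>s\<in>S. E i s \<in> M \<union> {0}) \<and>
      card {s\<in>S. E i s \<noteq> 0} \<le> r \<and> g i = finprod G (\<lambda>s. s [^]\<^bsub>G\<^esub> E i s) S"
    by (rule bchoice[THEN exE])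
  then have E_coeff: "\<And>i s. i < t \<Longrightarrow> s \<in> S \<Longrightarrow> E i s \<in> M \<union> {0}"
    and E_weight: "\<And>i. i < t \<Longrightarrow> card {s\<in>S. E i s \<noteq> 0} \<le> r"
    and E_prod: "\<And>i. i < t \<Longrightarrow> g i = finprod G (\<lambda>s. s [^]\<^bsub>G\<^esub> E i s) S"
    by simp_all
  define e where "e v = (case inv_into ({..<t} \<times> S) ?cv v of (i, s) \<Rightarrow> E i s)" for v
  have e_cv: "e (coord_vector G t i s) = E i s" if "i < t" "s \<in> S" for i s
    using inv_into_f_f[OF inj_on_coord_vector[OF assms(4)], of "(i, s)"] that
    by (simp add: e_def)
  show "\<exists>e. (\<forall>v\<in>?T. e v \<in> M \<union> {0}) \<and> card {v\<in>?T. e v \<noteq> 0} \<le> t * r \<and>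
      g = finprod (power_group G t) (\<lambda>v. v [^]\<^bsub>power_group G t\<^esub> e v) ?T"
  proof (intro exI conjI)
    show "\<forall>v\<in>?T. e v \<in> M \<union> {0}"
      using E_coeff by (auto simp: spread_set_eq_image e_cv simp del: Un_iff)
    show "card {v\<in>?T. e v \<noteq> 0} \<le> t * r"
      using assms(2) e_cv E_weight by (rule card_spread_set_support_le)
    show "g = finprod (power_group G t) (\<lambda>v. v [^]\<^bsub>power_group G t\<^esub> e v) ?T"
    proof (rule PiE_ext)
      interpret P: comm_group "power_group G t"
        using comm_group_power_group[OF assms(1)] .
      show "g \<in> {..<t} \<rightarrow>\<^sub>E carrier G"
        using g by (simp add: power_group_def)
      have "finprod (power_group G t) (\<lambda>v. v [^]\<^bsub>power_group G t\<^esub> e v) ?T \<in> carrier (power_group G t)"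
        using spread_set_subset_carrier[OF G.monoid_axioms assms(3)]
        by (auto intro!: P.finprod_closed P.int_pow_closed)
      then show "finprod (power_group G t) (\<lambda>v. v [^]\<^bsub>power_group G t\<^esub> e v) ?T \<in> {..<t} \<rightarrow>\<^sub>E carrier G"
        by (simp add: power_group_def)
      fix j assume "j \<in> {..<t}"
      then have "finprod (power_group G t) (\<lambda>v. v [^]\<^bsub>power_group G t\<^esub> e v) ?T j
          = finprod G (\<lambda>s. s [^]\<^bsub>G\<^esub> E j s) S"
        by (intro finprod_spread_set_component[OF assms(1-3)]) (simp_all add: e_cv)
      with E_prod \<open>j \<in> {..<t}\<close>
      show "g j = finprod (power_group G t) (\<lambda>v. v [^]\<^bsub>power_group G t\<^esub> e v) ?T j"
        by simp
    qed
  qed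
qed

lemma completely_splits_power_group:
  assumes "comm_group G" "finite S" "S \<subseteq> carrier G"
    and "completely_splits G M r S"
  shows "completely_splits (power_group G t) M (t * r) (spread_set G t S)"
proof -
  interpret G: comm_group G by fact
  \<comment> \<open>All copies of the identity in S^(t) coincide, so it is removed before coefficients are
    assigned coordinatewise.\<close>
  have "spread_set G t (S - {\<one>\<^bsub>G\<^esub>}) \<subseteq> spread_set G t S"
    by (rule spread_set_mono) blast
  moreover have "completely_splits (power_group G t) M (t * r) (spread_set G t (S - {\<one>\<^bsub>G\<^esub>}))"
    using assms completely_splits_Diff_one
    by (intro completely_splits_power_group_of_one_notin) auto
  ultimately show ?thesis
    by (rule completely_splits_superset[OF comm_group_power_group[OF assms(1)]
          finite_spread_set[OF assms(2)] spread_set_subset_carrier[OF G.is_monoid assms(3)]])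
qed

theorem theorem16:
  fixes G :: "('a, 'b) monoid_scheme" and M :: "int set" and S :: "'a set" and t :: nat
  assumes "comm_group G" and "finite (carrier G)"
    and "finite M" and "0 \<notin> M"
    and "S \<subseteq> carrier G"
    and "completely_splits G M 1 S"
    and "t > 0"
  shows "completely_splits (power_group G t) M t (spread_set G t S)"
  using completely_splits_power_group[OF assms(1) finite_subset[OF assms(5,2)] assms(5,6), of t]
  by simp

end
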